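(* Let $\mathbb{G}$ be an idemetric random network model. Then, for arbitrary fixed node labelings and port numberings, routing functions of total memory requirement $O(n\log n)$ bits suffice to achieve stretch $2+o(1)$ for almost all pairs: namely, for each $n$ there is a construction which, from $G_n$ and a node $r_n$ chosen uniformly at random from $G_n$, yields a routing function on $G_n$ with total memory requirement $O(n\log n)$ such that for every $\epsilon>0$, if $u,v$ are chosen uniformly at random from $G_n$, then with probability tending to $1$ as $n\to\infty$ the route produced from $u$ to $v$ has length at most $(2+\epsilon)\,d(u,v)$.
   Context: A random network model $\mathbb{G}$ assigns to every $n$ a probability distribution over graphs with $n$ nodes; $G_n$ is sampled from it; $d(u,v)$ is shortest-path distance. $\mathbb{G}$ is idemetric if there is a finite-valued function $f$ such that for $u_n,v_n$ chosen uniformly at random from $G_n$, $d(u_n,v_n)/f(n)\to1$ in probability. Routing framework: nodes carry labels in $\{1,\dots,n\}$ and each edge at node $u$ carries an output port number in $\{1,\dots,\deg(u)\}$ relative to $u$. A routing function is a family of local routing functions $R_u=(P_u,H_u)$; for distinct $u,v$ it produces a path $u=u_0,\dots,u_k=v$ with headers $h_0=v,\dots,h_k$ and ports $p_0=0,\dots,p_k$, where a message with header $h_i$ arriving at $u_i$ through port $p_i$ is forwarded on output port $P(u_i,p_i,h_i)=p_{i+1}$ with new header $H(u_i,p_i,h_i)=h_{i+1}$. The memory requirement of $u$ is the length of the shortest program computing $R_u$; the total memory requirement is the sum over nodes. A route has stretch $k$ if its length is at most $k$ times the distance. *)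

theory Defs
  imports "HOL-Probability.Probability" "HOL-Library.Nat_Bijection"
begin

section \<open>Graphs on the node set {1..n} (node labels = node names)\<close>

type_synonym graph = "(nat \<times> nat) set"

definition graph_on :: "nat \<Rightarrow> graph \<Rightarrow> bool" where
  "graph_on n G \<longleftrightarrow> G \<subseteq> {1..n} \<times> {1..n} \<and> (\<forall>x y. (x,y) \<in> G \<longrightarrow> (y,x) \<in> G)
     \<and> (\<forall>x. (x,x) \<notin> G)"

definition nbrs :: "graph \<Rightarrow> nat \<Rightarrow> nat set" where
  "nbrs G x = {y. (x,y) \<in> G}"

definition deg :: "graph \<Rightarrow> nat \<Rightarrow> nat" where
  "deg G x = card (nbrs G x)"

definition gdist :: "graph \<Rightarrow> nat \<Rightarrow> nat \<Rightarrow> enat" where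
  "gdist G u v = (INF k \<in> {k. (u,v) \<in> G ^^ k}. enat k)"

definition random_network_model :: "(nat \<Rightarrow> graph pmf) \<Rightarrow> bool" where
  "random_network_model M \<longleftrightarrow> (\<forall>n. \<forall>G \<in> set_pmf (M n). graph_on n G)"

definition pair_sample :: "(nat \<Rightarrow> graph pmf) \<Rightarrow> nat \<Rightarrow> (graph \<times> nat \<times> nat) pmf" where
  "pair_sample M n = do { G \<leftarrow> M n; u \<leftarrow> pmf_of_set {1..n}; v \<leftarrow> pmf_of_set {1..n};
                          return_pmf (G, u, v) }"

definition idemetric :: "(nat \<Rightarrow> graph pmf) \<Rightarrow> bool" where
  "idemetric M \<longleftrightarrow> (\<exists>f :: nat \<Rightarrow> real. \<forall>\<epsilon>>0.
     (\<lambda>n. measure_pmf.prob (pair_sample M n)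
        {(G,u,v). gdist G u v \<noteq> \<infinity> \<and> \<bar>real (the_enat (gdist G u v)) / f n - 1\<bar> \<le> \<epsilon>})
     \<longlonglongrightarrow> 1)"

definition root_pair_sample :: "(nat \<Rightarrow> graph pmf) \<Rightarrow> nat \<Rightarrow> (graph \<times> nat \<times> nat \<times> nat) pmf" where
  "root_pair_sample M n = do { G \<leftarrow> M n; r \<leftarrow> pmf_of_set {1..n}; u \<leftarrow> pmf_of_set {1..n};
                          v \<leftarrow> pmf_of_set {1..n}; return_pmf (G, r, u, v) }"

definition port_numbering :: "nat \<Rightarrow> graph \<Rightarrow> (nat \<Rightarrow> nat \<Rightarrow> nat) \<Rightarrow> bool" where
  "port_numbering n G pn \<longleftrightarrow> (\<forall>x\<in>{1..n}. bij_betw (pn x) {1..deg G x} (nbrs G x))"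

text \<open>A routing function: \<open>R x (p,h) = (P(x,p,h), H(x,p,h))\<close>; ports and headers are naturals.\<close>
type_synonym routing = "nat \<Rightarrow> nat \<times> nat \<Rightarrow> nat \<times> nat"

definition rstep :: "(nat \<Rightarrow> nat \<Rightarrow> nat) \<Rightarrow> routing \<Rightarrow> nat \<times> nat \<times> nat \<Rightarrow> nat \<times> nat \<times> nat" where
  "rstep pn R s = (case s of (x, p, h) \<Rightarrow> (case R x (p, h) of (p', h') \<Rightarrow> (pn x p', p', h')))"

definition rstate :: "(nat \<Rightarrow> nat \<Rightarrow> nat) \<Rightarrow> routing \<Rightarrow> nat \<Rightarrow> nat \<Rightarrow> nat \<Rightarrow> nat \<times> nat \<times> nat" where
  "rstate pn R u v i = (rstep pn R ^^ i) (u, 0, v)"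

definition route_arrives :: "graph \<Rightarrow> (nat \<Rightarrow> nat \<Rightarrow> nat) \<Rightarrow> routing \<Rightarrow> nat \<Rightarrow> nat \<Rightarrow> nat \<Rightarrow> bool" where
  "route_arrives G pn R u v k \<longleftrightarrow>
     fst (rstate pn R u v k) = v \<and>
     (\<forall>i<k. case rstate pn R u v i of (x, p, h) \<Rightarrow> fst (R x (p, h)) \<in> {1..deg G x})"

definition route_length_le :: "graph \<Rightarrow> (nat \<Rightarrow> nat \<Rightarrow> nat) \<Rightarrow> routing \<Rightarrow> nat \<Rightarrow> nat \<Rightarrow> real \<Rightarrow> bool" where
  "route_length_le G pn R u v c \<longleftrightarrow> (\<exists>k. real k \<le> c \<and> route_arrives G pn R u v k)"

definition routing_function :: "nat \<Rightarrow> graph \<Rightarrow> (nat \<Rightarrow> nat \<Rightarrow> nat) \<Rightarrow> routing \<Rightarrow> bool" where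
  "routing_function n G pn R \<longleftrightarrow>
     (\<forall>u\<in>{1..n}. \<forall>v\<in>{1..n}. u \<noteq> v \<and> gdist G u v \<noteq> \<infinity> \<longrightarrow> (\<exists>k. route_arrives G pn R u v k))"

text \<open>A Turing-complete language of mu-recursive functions on naturals (with Cantor pairing),
  including binary-encoded constants.\<close>
datatype prog = PZero | PSucc | PConst nat | PFst | PSnd | PPair prog prog | PComp prog prog
  | PRec prog prog | PMu prog

inductive eval :: "prog \<Rightarrow> nat \<Rightarrow> nat \<Rightarrow> bool" where
  "eval PZero x 0"
| "eval PSucc x (Suc x)"
| "eval (PConst c) x c"
| "eval PFst x (fst (prod_decode x))"
| "eval PSnd x (snd (prod_decode x))"
| "eval f x a \<Longrightarrow> eval g x b \<Longrightarrow> eval (PPair f g) x (prod_encode (a, b))"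
| "eval g x y \<Longrightarrow> eval f y z \<Longrightarrow> eval (PComp f g) x z"
| "eval g a y \<Longrightarrow> eval (PRec g h) (prod_encode (a, 0)) y"
| "eval (PRec g h) (prod_encode (a, k)) y \<Longrightarrow> eval h (prod_encode (a, prod_encode (k, y))) z
     \<Longrightarrow> eval (PRec g h) (prod_encode (a, Suc k)) z"
| "eval f (prod_encode (x, y)) 0 \<Longrightarrow> (\<forall>z<y. \<exists>w. w \<noteq> 0 \<and> eval f (prod_encode (x, z)) w)
     \<Longrightarrow> eval (PMu f) x y"

function bits :: "nat \<Rightarrow> bool list" where
  "bits n = (if n = 0 then [] else odd n # bits (n div 2))"
  by auto
termination by (relation "Wellfounded.measure id") auto

definition selfdelim :: "bool list \<Rightarrow> bool list" where
  "selfdelim xs = concat (map (\<lambda>b. [True, b]) xs) @ [False]"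

text \<open>Prefix-free binary encoding of programs.\<close>
primrec enc :: "prog \<Rightarrow> bool list" where
  "enc PZero = [False, False, False, False]"
| "enc PSucc = [False, False, False, True]"
| "enc (PConst c) = [False, False, True, False] @ selfdelim (bits c)"
| "enc PFst = [False, False, True, True]"
| "enc PSnd = [False, True, False, False]"
| "enc (PPair f g) = [False, True, False, True] @ enc f @ enc g"
| "enc (PComp f g) = [False, True, True, False] @ enc f @ enc g"
| "enc (PRec g h) = [False, True, True, True] @ enc g @ enc h"
| "enc (PMu f) = [True, False, False, False] @ enc f"

definition computes :: "prog \<Rightarrow> (nat \<times> nat \<Rightarrow> nat \<times> nat) \<Rightarrow> bool" where
  "computes q Ru \<longleftrightarrow> (\<forall>p h. eval q (prod_encode (p, h)) (prod_encode (Ru (p, h))))"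

definition local_memory :: "(nat \<times> nat \<Rightarrow> nat \<times> nat) \<Rightarrow> enat" where
  "local_memory Ru = (INF q \<in> {q. computes q Ru}. enat (length (enc q)))"

definition total_memory :: "nat \<Rightarrow> routing \<Rightarrow> enat" where
  "total_memory n R = (\<Sum>u\<in>{1..n}. local_memory (R u))"

end

theory Submission
  imports Defs
begin

text \<open>
  Route everything along a shortest-path spanning tree rooted at the random node r (every
  other component gets a root of its own). A non-root node only stores the port to its
  parent, which costs O(log n) bits; the root stores, for every node y of its tree, the
  parent of y and the port leading from that parent down to y, which costs O(n log n) bits.
  A message from u to v climbs to the root, the root writes the sequence of downward ports
  towards v into the header, and the message descends along it. The route therefore has
  length at most d(r, u) + d(r, v). By idemetricity d(r, u), d(r, v) and d(u, v) are all
  within a factor 1 + o(1) of f(n) with probability tending to 1, and then the route is at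
  most (2 + o(1)) d(u, v).
\<close>

section \<open>Total programs\<close>

definition implements :: "prog \<Rightarrow> (nat \<Rightarrow> nat) \<Rightarrow> bool" where
  "implements q F \<longleftrightarrow> (\<forall>x. eval q x (F x))"

lemma implements_cong: "implements q F \<Longrightarrow> (\<And>x. F x = F' x) \<Longrightarrow> implements q F'"
  unfolding implements_def by simp

lemma implements_const: "implements (PConst c) (\<lambda>_. c)"
  unfolding implements_def by (blast intro: eval.intros)

lemma implements_zero: "implements PZero (\<lambda>_. 0)"
  unfolding implements_def by (blast intro: eval.intros)

lemma implements_succ: "implements PSucc Suc"
  unfolding implements_def by (blast intro: eval.intros)

lemma implements_fst: "implements PFst (\<lambda>x. fst (prod_decode x))"
  unfolding implements_def by (blast intro: eval.intros)

lemma implements_snd: "implements PSnd (\<lambda>x. snd (prod_decode x))"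
  unfolding implements_def by (blast intro: eval.intros)

lemma implements_pair:
  "implements f F \<Longrightarrow> implements g G \<Longrightarrow> implements (PPair f g) (\<lambda>x. prod_encode (F x, G x))"
  unfolding implements_def by (blast intro: eval.intros)

lemma implements_comp:
  "implements f F \<Longrightarrow> implements g G \<Longrightarrow> implements (PComp f g) (\<lambda>x. F (G x))"
  unfolding implements_def by (blast intro: eval.intros)

lemma eval_PRec:
  assumes "eval g a (F 0)" and "\<And>k. eval h (prod_encode (a, prod_encode (k, F k))) (F (Suc k))"
  shows "eval (PRec g h) (prod_encode (a, k)) (F k)"
  by (induction k) (auto intro: eval.intros(8,9) assms)

lemma implements_rec_nat:
  assumes "implements g G" and "implements h H"
  shows "implements (PRec g h) (\<lambda>x. case prod_decode x of (a, k) \<Rightarrow>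
           rec_nat (G a) (\<lambda>k y. H (prod_encode (a, prod_encode (k, y)))) k)"
  unfolding implements_def
proof
  fix x
  obtain a k where x: "x = prod_encode (a, k)"
    by (metis prod_decode_inverse surj_pair)
  show "eval (PRec g h) x (case prod_decode x of (a, k) \<Rightarrow>
           rec_nat (G a) (\<lambda>k y. H (prod_encode (a, prod_encode (k, y)))) k)"
    unfolding x using assms
    by (auto intro!: eval_PRec[of g a _ h] simp: implements_def)
qed

definition prog_id :: prog where
  "prog_id = PPair PFst PSnd"

lemma implements_id: "implements prog_id (\<lambda>x. x)"
  using implements_pair[OF implements_fst implements_snd] by (simp add: prog_id_def)

text \<open>Branching is primitive recursion on the test value, with base case e1 and a step case
  that discards the recursive result and runs e2.\<close>

definition prog_if0 :: "prog \<Rightarrow> prog \<Rightarrow> prog \<Rightarrow> prog" where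
  "prog_if0 t e1 e2 = PComp (PRec e1 (PComp e2 PFst)) (PPair prog_id t)"

lemma implements_if0:
  assumes "implements t T" "implements e1 E1" "implements e2 E2"
  shows "implements (prog_if0 t e1 e2) (\<lambda>x. if T x = 0 then E1 x else E2 x)"
proof -
  have "rec_nat (E1 a) (\<lambda>k y. E2 a) k = (if k = 0 then E1 a else E2 a)" for a k
    by (cases k) simp_all
  then have "implements (PRec e1 (PComp e2 PFst))
          (\<lambda>y. case prod_decode y of (a, k) \<Rightarrow> if k = 0 then E1 a else E2 a)"
    using implements_rec_nat[OF assms(2) implements_comp[OF assms(3) implements_fst]]
    by simp
  from implements_comp[OF this implements_pair[OF implements_id assms(1)]] show ?thesis
    by (simp add: prog_if0_def)
qed

definition prog_iterate :: "prog \<Rightarrow> prog" where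
  "prog_iterate f = PRec prog_id (PComp f (PComp PSnd PSnd))"

lemma implements_iterate:
  assumes "implements f F"
  shows "implements (prog_iterate f) (\<lambda>x. case prod_decode x of (a, k) \<Rightarrow> (F ^^ k) a)"
proof -
  have "rec_nat a (\<lambda>k y. F y) k = (F ^^ k) a" for a k
    by (induction k) simp_all
  then show ?thesis
    using implements_rec_nat[OF implements_id implements_comp[OF assms
            implements_comp[OF implements_snd implements_snd]]]
    by (simp add: prog_iterate_def)
qed

definition prog_add :: prog where
  "prog_add = prog_iterate PSucc"

lemma implements_add: "implements prog_add (\<lambda>x. case prod_decode x of (a, b) \<Rightarrow> a + b)"
  using implements_iterate[OF implements_succ] by (simp add: prog_add_def add.commute)

definition prog_pred :: prog where
  "prog_pred = PComp (PRec PZero (PComp PFst PSnd)) (PPair PZero prog_id)"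

lemma implements_pred: "implements prog_pred (\<lambda>x. x - 1)"
proof -
  have "rec_nat 0 (\<lambda>k y. k) x = x - 1" for x :: nat
    by (cases x) simp_all
  then show ?thesis
    using implements_comp[OF implements_rec_nat[OF implements_zero
            implements_comp[OF implements_fst implements_snd]]
          implements_pair[OF implements_zero implements_id]]
    by (simp add: prog_pred_def)
qed

definition prog_sub :: prog where
  "prog_sub = prog_iterate prog_pred"

lemma implements_sub: "implements prog_sub (\<lambda>x. case prod_decode x of (a, b) \<Rightarrow> a - b)"
proof -
  have "((\<lambda>x. x - 1) ^^ k) a = a - k" for a k :: nat
    by (induction k) simp_all
  with implements_iterate[OF implements_pred] show ?thesis
    by (simp add: prog_sub_def)
qed

definition prog_absdiff :: "nat \<Rightarrow> prog" where
  "prog_absdiff c = PComp prog_add (PPair (PComp prog_sub (PPair prog_id (PConst c)))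
                                          (PComp prog_sub (PPair (PConst c) prog_id)))"

lemma implements_absdiff: "implements (prog_absdiff c) (\<lambda>x. (x - c) + (c - x))"
  using implements_comp[OF implements_add implements_pair[OF
          implements_comp[OF implements_sub implements_pair[OF implements_id implements_const]]
          implements_comp[OF implements_sub implements_pair[OF implements_const implements_id]]]]
  by (simp add: prog_absdiff_def)

definition prog_if_eq :: "nat \<Rightarrow> prog \<Rightarrow> prog \<Rightarrow> prog" where
  "prog_if_eq c e1 e2 = prog_if0 (prog_absdiff c) e1 e2"

lemma implements_if_eq:
  assumes "implements e1 E1" "implements e2 E2"
  shows "implements (prog_if_eq c e1 e2) (\<lambda>x. if x = c then E1 x else E2 x)"
proof -
  have eq: "(x - c) + (c - x) = 0 \<longleftrightarrow> x = c" for x :: nat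
    by auto
  show ?thesis
    using implements_if0[OF implements_absdiff[of c] assms] unfolding prog_if_eq_def eq .
qed

fun table_lookup :: "(nat \<times> nat) list \<Rightarrow> nat \<Rightarrow> nat" where
  "table_lookup [] x = 0"
| "table_lookup ((a, b) # es) x = (if x = a then b else table_lookup es x)"

lemma table_lookup_graph:
  "table_lookup (map (\<lambda>y. (y, F y)) ys) x = (if x \<in> set ys then F x else 0)"
  by (induction ys) auto

fun prog_table :: "(nat \<times> nat) list \<Rightarrow> prog" where
  "prog_table [] = PZero"
| "prog_table ((a, b) # es) = prog_if_eq a (PConst b) (prog_table es)"

lemma implements_table: "implements (prog_table es) (table_lookup es)"
  by (induction es rule: prog_table.induct)
     (auto simp: implements_zero implements_const cong: if_cong
           dest: implements_if_eq[OF implements_const])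

lemma computes_if_implements:
  assumes "implements q (\<lambda>x. prod_encode (Ru (prod_decode x)))"
  shows "computes q Ru"
  using assms unfolding implements_def computes_def by (metis prod_encode_inverse)

section \<open>Hop distance and the spanning forest\<close>

definition hop_dist :: "graph \<Rightarrow> nat \<Rightarrow> nat \<Rightarrow> nat" where
  "hop_dist G a b = (LEAST k. (a, b) \<in> G ^^ k)"

lemma hop_dist_relpow: "(a, b) \<in> G\<^sup>* \<Longrightarrow> (a, b) \<in> G ^^ hop_dist G a b"
  unfolding hop_dist_def by (rule LeastI_ex) (auto simp: rtrancl_power)

lemma hop_dist_le: "(a, b) \<in> G ^^ k \<Longrightarrow> hop_dist G a b \<le> k"
  unfolding hop_dist_def by (rule Least_le)

lemma hop_dist_eq_0_iff: "(a, b) \<in> G\<^sup>* \<Longrightarrow> hop_dist G a b = 0 \<longleftrightarrow> a = b"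
  using hop_dist_relpow[where a = a and b = b and G = G]
    hop_dist_le[where a = a and b = a and G = G and k = 0]
  by fastforce

lemma gdist_eq: "gdist G a b = (if (a, b) \<in> G\<^sup>* then enat (hop_dist G a b) else \<infinity>)"
proof (cases "(a, b) \<in> G\<^sup>*")
  case True
  have "(INF k\<in>{k. (a, b) \<in> G ^^ k}. enat k) = enat (hop_dist G a b)"
  proof (rule antisym)
    show "(INF k\<in>{k. (a, b) \<in> G ^^ k}. enat k) \<le> enat (hop_dist G a b)"
      using hop_dist_relpow[OF True] by (blast intro: INF_lower)
    show "enat (hop_dist G a b) \<le> (INF k\<in>{k. (a, b) \<in> G ^^ k}. enat k)"
      by (rule INF_greatest) (simp add: hop_dist_le)
  qed
  with True show ?thesis
    unfolding gdist_def by simp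
next
  case False
  then have "{k. (a, b) \<in> G ^^ k} = {}"
    by (auto simp: rtrancl_power)
  with False show ?thesis
    unfolding gdist_def by (simp add: top_enat_def)
qed

lemma gdist_finite_iff: "gdist G a b \<noteq> \<infinity> \<longleftrightarrow> (a, b) \<in> G\<^sup>*"
  by (simp add: gdist_eq)

definition comp_root :: "graph \<Rightarrow> nat \<Rightarrow> nat \<Rightarrow> nat" where
  "comp_root G r x = (if (r, x) \<in> G\<^sup>* then r else (LEAST y. (y, x) \<in> G\<^sup>*))"

definition depth :: "graph \<Rightarrow> nat \<Rightarrow> nat \<Rightarrow> nat" where
  "depth G r x = hop_dist G (comp_root G r x) x"

definition parent :: "graph \<Rightarrow> nat \<Rightarrow> nat \<Rightarrow> nat" where
  "parent G r x = (SOME y. (y, x) \<in> G \<and> (comp_root G r x, y) \<in> G\<^sup>* \<and>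
                           Suc (hop_dist G (comp_root G r x) y) = depth G r x)"

locale rooted_graph =
  fixes n :: nat and G :: graph and r :: nat
  assumes graph_on: "graph_on n G"
begin

lemma sym_G: "sym G"
  using graph_on unfolding graph_on_def sym_def by blast

lemma edge_in_nodes: "(a, b) \<in> G \<Longrightarrow> a \<in> {1..n} \<and> b \<in> {1..n}"
  using graph_on unfolding graph_on_def by blast

lemma deg_le: "deg G x \<le> n"
proof -
  have "nbrs G x \<subseteq> {1..n}"
    unfolding nbrs_def using edge_in_nodes by blast
  then show ?thesis
    unfolding deg_def using card_mono[of "{1..n}"] by fastforce
qed

lemma reachable_sym: "(a, b) \<in> G\<^sup>* \<Longrightarrow> (b, a) \<in> G\<^sup>*"
  using sym_rtrancl[OF sym_G] unfolding sym_def by blast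

lemma reachable_in_nodes: "(a, b) \<in> G\<^sup>* \<Longrightarrow> b \<in> {1..n} \<Longrightarrow> a \<in> {1..n}"
  by (induction rule: converse_rtrancl_induct) (auto dest: edge_in_nodes)

lemma comp_root_reaches: "(comp_root G r x, x) \<in> G\<^sup>*"
  unfolding comp_root_def by (auto intro: LeastI[of "\<lambda>y. (y, x) \<in> G\<^sup>*" x])

lemma comp_root_in_nodes: "x \<in> {1..n} \<Longrightarrow> comp_root G r x \<in> {1..n}"
  using reachable_in_nodes[OF comp_root_reaches] .

lemma comp_root_eq: "(y, x) \<in> G\<^sup>* \<Longrightarrow> comp_root G r y = comp_root G r x"
proof -
  assume yx: "(y, x) \<in> G\<^sup>*"
  then have "(z, y) \<in> G\<^sup>* \<longleftrightarrow> (z, x) \<in> G\<^sup>*" for z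
    using reachable_sym rtrancl_trans by metis
  then show ?thesis
    unfolding comp_root_def by presburger
qed

lemma comp_root_idem: "comp_root G r (comp_root G r x) = comp_root G r x"
  using comp_root_eq[OF comp_root_reaches] .

lemma depth_eq_0_iff: "depth G r x = 0 \<longleftrightarrow> comp_root G r x = x"
  unfolding depth_def using hop_dist_eq_0_iff[OF comp_root_reaches] by blast

lemma depth_le: "depth G r x \<le> n * n"
proof (cases "comp_root G r x = x")
  case True
  then have "depth G r x = 0"
    using depth_eq_0_iff by blast
  then show ?thesis
    by simp
next
  case False
  have "G \<subseteq> {1..n} \<times> {1..n}"
    using graph_on unfolding graph_on_def by blast
  then have fin: "finite G" and card: "card G \<le> n * n"
    using finite_subset card_mono[of "{1..n} \<times> {1..n}" G] by auto
  have "(comp_root G r x, x) \<in> G\<^sup>+"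
    using comp_root_reaches False by (meson rtranclD)
  then obtain m where "m \<le> card G" "(comp_root G r x, x) \<in> G ^^ m"
    using trancl_finite_eq_relpow[OF fin] by auto
  then show ?thesis
    unfolding depth_def using hop_dist_le card by fastforce
qed

lemma parent_exists:
  assumes "comp_root G r x \<noteq> x"
  shows "\<exists>y. (y, x) \<in> G \<and> (comp_root G r x, y) \<in> G\<^sup>* \<and>
             Suc (hop_dist G (comp_root G r x) y) = depth G r x"
proof -
  let ?a = "comp_root G r x"
  obtain k where k: "depth G r x = Suc k"
    using assms depth_eq_0_iff by (cases "depth G r x") auto
  then have "(?a, x) \<in> G ^^ Suc k"
    unfolding depth_def using hop_dist_relpow[OF comp_root_reaches] by metis
  then obtain y where ay: "(?a, y) \<in> G ^^ k" and yx: "(y, x) \<in> G"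
    by (auto elim: relpow_Suc_E)
  have "(?a, x) \<in> G ^^ Suc (hop_dist G ?a y)"
    using hop_dist_relpow[OF relpow_imp_rtrancl[OF ay]] yx by auto
  then have "k \<le> hop_dist G ?a y"
    using hop_dist_le k unfolding depth_def by fastforce
  with hop_dist_le[OF ay] have "hop_dist G ?a y = k"
    by simp
  with ay yx k show ?thesis
    by (metis relpow_imp_rtrancl)
qed

lemma
  assumes "comp_root G r x \<noteq> x"
  shows parent_edge: "(x, parent G r x) \<in> G"
    and comp_root_parent: "comp_root G r (parent G r x) = comp_root G r x"
    and depth_parent: "Suc (depth G r (parent G r x)) = depth G r x"
    and parent_in_nodes: "parent G r x \<in> {1..n}"
proof -
  have P: "(parent G r x, x) \<in> G \<and> (comp_root G r x, parent G r x) \<in> G\<^sup>* \<and>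
           Suc (hop_dist G (comp_root G r x) (parent G r x)) = depth G r x"
    unfolding parent_def by (rule someI_ex[OF parent_exists[OF assms]])
  then show "(x, parent G r x) \<in> G"
    using sym_G unfolding sym_def by blast
  show root: "comp_root G r (parent G r x) = comp_root G r x"
    using P comp_root_eq by blast
  show "Suc (depth G r (parent G r x)) = depth G r x"
    using P root unfolding depth_def by simp
  show "parent G r x \<in> {1..n}"
    using P edge_in_nodes by blast
qed

end

section \<open>Tree routing\<close>

text \<open>Header encoding: input port 0 marks the source of the message; a header (0, v) is on
  its way up to the root; a header (p, h) with p \<noteq> 0 is on its way down and is forwarded
  through port p with new header h. Ports are at least 1, so the two cases never clash.\<close>

definition relay_fun :: "nat \<Rightarrow> nat \<times> nat \<Rightarrow> nat \<times> nat" where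
  "relay_fun c = (\<lambda>(p, h). if p = 0 then (c, prod_encode (0, h))
                          else if fst (prod_decode h) = 0 then (c, h) else prod_decode h)"

text \<open>The root computes the downward header for v from its table, which maps each non-root y
  of its tree to the pair (parent of y, port from the parent to y) and everything else to 0:
  starting from (v, acc) it repeatedly replaces (y, acc) by (parent of y, (port, acc)).\<close>

definition climb_step :: "(nat \<Rightarrow> nat) \<Rightarrow> nat \<Rightarrow> nat" where
  "climb_step tab s = (let x = fst (prod_decode s); e = prod_decode (tab x) in
     if tab x = 0 then s else prod_encode (fst e, prod_encode (snd e, snd (prod_decode s))))"

definition path_header :: "(nat \<Rightarrow> nat) \<Rightarrow> nat \<Rightarrow> nat \<Rightarrow> nat \<Rightarrow> nat" where
  "path_header tab N x acc = snd (prod_decode ((climb_step tab ^^ N) (prod_encode (x, acc))))"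

definition root_fun :: "(nat \<Rightarrow> nat) \<Rightarrow> nat \<times> nat \<Rightarrow> nat \<times> nat" where
  "root_fun L = (\<lambda>(p, h). if p = 0 then prod_decode (L h)
                         else if fst (prod_decode h) = 0 then prod_decode (L (snd (prod_decode h)))
                         else prod_decode h)"

definition port_to :: "(nat \<Rightarrow> nat \<Rightarrow> nat) \<Rightarrow> graph \<Rightarrow> nat \<Rightarrow> nat \<Rightarrow> nat" where
  "port_to pn G x y = inv_into {1..deg G x} (pn x) y"

definition parent_entry :: "(nat \<Rightarrow> nat \<Rightarrow> nat) \<Rightarrow> graph \<Rightarrow> nat \<Rightarrow> nat \<Rightarrow> nat" where
  "parent_entry pn G r y = (if comp_root G r y = y then 0
     else prod_encode (parent G r y, port_to pn G (parent G r y) y))"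

definition component :: "nat \<Rightarrow> graph \<Rightarrow> nat \<Rightarrow> nat \<Rightarrow> nat set" where
  "component n G r \<rho> = {y \<in> {1..n}. comp_root G r y = \<rho>}"

definition parent_table ::
    "nat \<Rightarrow> graph \<Rightarrow> nat \<Rightarrow> (nat \<Rightarrow> nat \<Rightarrow> nat) \<Rightarrow> nat \<Rightarrow> (nat \<times> nat) list" where
  "parent_table n G r pn \<rho> =
     map (\<lambda>y. (y, parent_entry pn G r y)) (sorted_list_of_set (component n G r \<rho>))"

text \<open>Every depth is at most n * n (lemma depth_le), so n * n climbing steps reach the root.\<close>

definition tree_routing :: "nat \<Rightarrow> graph \<Rightarrow> nat \<Rightarrow> (nat \<Rightarrow> nat \<Rightarrow> nat) \<Rightarrow> routing" where
  "tree_routing n G r pn x = (if comp_root G r x = x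
     then root_fun (\<lambda>v. path_header (table_lookup (parent_table n G r pn x)) (n * n) v 0)
     else relay_fun (port_to pn G x (parent G r x)))"

definition valid_hop :: "graph \<Rightarrow> routing \<Rightarrow> nat \<times> nat \<times> nat \<Rightarrow> bool" where
  "valid_hop G R s = (case s of (x, p, h) \<Rightarrow> fst (R x (p, h)) \<in> {1..deg G x})"

definition route_run :: "graph \<Rightarrow> (nat \<Rightarrow> nat \<Rightarrow> nat) \<Rightarrow> routing \<Rightarrow>
    nat \<times> nat \<times> nat \<Rightarrow> nat \<Rightarrow> nat \<times> nat \<times> nat \<Rightarrow> bool"
  where "route_run G pn R s k t \<longleftrightarrow>
           (rstep pn R ^^ k) s = t \<and> (\<forall>i<k. valid_hop G R ((rstep pn R ^^ i) s))"

lemma route_run_0: "route_run G pn R s 0 s"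
  unfolding route_run_def by simp

lemma route_run_hop:
  assumes "R x (p, h) = (p', h')" "p' \<in> {1..deg G x}"
  shows "route_run G pn R (x, p, h) 1 (pn x p', p', h')"
  using assms unfolding route_run_def valid_hop_def rstep_def by simp

lemma route_run_add:
  assumes s: "route_run G pn R s a t" and t: "route_run G pn R t b w"
  shows "route_run G pn R s (a + b) w"
  unfolding route_run_def
proof
  show "(rstep pn R ^^ (a + b)) s = w"
    using s t unfolding route_run_def by (simp add: funpow_add add.commute[of a b])
  show "\<forall>i<a + b. valid_hop G R ((rstep pn R ^^ i) s)"
  proof (intro allI impI)
    fix i assume "i < a + b"
    show "valid_hop G R ((rstep pn R ^^ i) s)"
    proof (cases "i < a")
      case True
      then show ?thesis
        using s unfolding route_run_def by simp
    next
      case False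
      then obtain j where j: "i = j + a"
        by (metis add.commute le_add_diff_inverse not_less)
      then have "(rstep pn R ^^ i) s = (rstep pn R ^^ j) t" "j < b"
        using s \<open>i < a + b\<close> unfolding route_run_def by (simp_all add: funpow_add)
      then show ?thesis
        using t unfolding route_run_def by simp
    qed
  qed
qed

lemma route_arrives_if_run:
  "route_run G pn R (u, 0, v) k (v, p, h) \<Longrightarrow> route_arrives G pn R u v k"
  unfolding route_run_def route_arrives_def rstate_def valid_hop_def by auto

lemma funpow_reaches_fixpoint:
  assumes closed: "\<And>y. y \<in> S \<Longrightarrow> f y \<in> S"
    and fixed: "\<And>y. y \<in> S \<Longrightarrow> d y = 0 \<Longrightarrow> f y = y"
    and decreasing: "\<And>y. y \<in> S \<Longrightarrow> d y \<noteq> 0 \<Longrightarrow> d (f y) < d y"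
    and "y \<in> S" "d y \<le> N"
  shows "f ((f ^^ N) y) = (f ^^ N) y"
  using assms(4,5)
proof (induction N arbitrary: y)
  case 0
  then show ?case
    using fixed by simp
next
  case (Suc N)
  show ?case
  proof (cases "d y = 0")
    case True
    then have "f ((f ^^ N) y) = (f ^^ N) y"
      using Suc by simp
    with fixed[OF Suc.prems(1) True] show ?thesis
      by (simp add: funpow_swap1)
  next
    case False
    then have "f ((f ^^ N) (f y)) = (f ^^ N) (f y)"
      using Suc closed decreasing by fastforce
    then show ?thesis
      by (simp add: funpow_swap1)
  qed
qed

locale tree_routing_scheme = rooted_graph +
  fixes pn :: "nat \<Rightarrow> nat \<Rightarrow> nat"
  assumes port_numbering: "port_numbering n G pn"
begin

abbreviation "R \<equiv> tree_routing n G r pn"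
abbreviation "table \<rho> \<equiv> table_lookup (parent_table n G r pn \<rho>)"
abbreviation "header x acc \<equiv> path_header (table (comp_root G r x)) (n * n) x acc"
abbreviation "up_port x \<equiv> port_to pn G x (parent G r x)"
abbreviation "down_port x \<equiv> port_to pn G (parent G r x) x"

lemma
  assumes "(x, y) \<in> G"
  shows port_to_range: "port_to pn G x y \<in> {1..deg G x}"
    and port_to_inverse: "pn x (port_to pn G x y) = y"
proof -
  have "bij_betw (pn x) {1..deg G x} (nbrs G x)"
    using port_numbering edge_in_nodes[OF assms] unfolding port_numbering_def by blast
  then have "y \<in> pn x ` {1..deg G x}"
    using assms unfolding bij_betw_def nbrs_def by auto
  then show "port_to pn G x y \<in> {1..deg G x}" "pn x (port_to pn G x y) = y"
    unfolding port_to_def by (rule inv_into_into, rule f_inv_into_f)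
qed

lemma
  assumes "comp_root G r x \<noteq> x"
  shows up_port: "up_port x \<in> {1..deg G x}" "pn x (up_port x) = parent G r x"
    and down_port: "down_port x \<in> {1..deg G (parent G r x)}" "pn (parent G r x) (down_port x) = x"
  using port_to_range port_to_inverse parent_edge[OF assms] sym_G unfolding sym_def by blast+

lemma table_lookup_parent_table:
  assumes "x \<in> {1..n}"
  shows "table (comp_root G r x) x = parent_entry pn G r x"
  using assms by (simp add: parent_table_def table_lookup_graph component_def)

lemma climb_step_table:
  assumes "x \<in> {1..n}" "comp_root G r x = \<rho>"
  shows "climb_step (table \<rho>) (prod_encode (x, acc)) =
           (if comp_root G r x = x then prod_encode (x, acc)
            else prod_encode (parent G r x, prod_encode (down_port x, acc)))"
proof (cases "comp_root G r x = x")
  case nonroot: False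
  have "parent_entry pn G r x \<noteq> 0"
    using nonroot down_port[OF nonroot] le_prod_encode_2[of "down_port x" "parent G r x"]
    by (auto simp: parent_entry_def)
  then show ?thesis
    using table_lookup_parent_table[OF assms(1)] nonroot assms(2)
    by (simp add: climb_step_def parent_entry_def)
qed (use table_lookup_parent_table[OF assms(1)] assms(2) in
      \<open>simp add: climb_step_def parent_entry_def\<close>)

lemma climb_reaches_root:
  assumes "x \<in> {1..n}" "depth G r x \<le> N"
  defines "f \<equiv> climb_step (table (comp_root G r x))"
  shows "f ((f ^^ N) (prod_encode (x, acc))) = (f ^^ N) (prod_encode (x, acc))"
proof -
  let ?S = "{prod_encode (y, a) | y a. y \<in> {1..n} \<and> comp_root G r y = comp_root G r x}"
  let ?d = "\<lambda>s. depth G r (fst (prod_decode s))"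
  show ?thesis
  proof (rule funpow_reaches_fixpoint[where S = ?S and d = ?d])
    fix s assume "s \<in> ?S"
    then obtain y a where s: "s = prod_encode (y, a)" "y \<in> {1..n}"
      and y_root: "comp_root G r y = comp_root G r x"
      by blast
    note step = climb_step_table[OF s(2) y_root, of a, folded s(1) f_def]
    have depth_s: "?d s = depth G r y"
      using s(1) by simp
    show "f s \<in> ?S"
    proof (cases "comp_root G r y = y")
      case True
      show ?thesis
        using \<open>s \<in> ?S\<close> unfolding step if_P[OF True] .
    next
      case False
      have "comp_root G r (parent G r y) = comp_root G r x"
        using comp_root_parent[OF False] y_root by simp
      with parent_in_nodes[OF False] show ?thesis
        unfolding step if_not_P[OF False] by blast
    qed
    show "?d s = 0 \<Longrightarrow> f s = s"
      using step unfolding depth_s depth_eq_0_iff by simp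
    assume "?d s \<noteq> 0"
    then have "comp_root G r y \<noteq> y"
      unfolding depth_s depth_eq_0_iff .
    then show "?d (f s) < ?d s"
      using depth_parent[of y] unfolding step depth_s if_not_P[OF \<open>comp_root G r y \<noteq> y\<close>]
      by simp
  qed (use assms(1,2) in auto)
qed

lemma header_root:
  assumes "x \<in> {1..n}" "comp_root G r x = x"
  shows "header x acc = acc"
proof -
  have "climb_step (table x) (prod_encode (x, acc)) = prod_encode (x, acc)"
    using climb_step_table[OF assms] assms(2) by simp
  then have "(climb_step (table x) ^^ N) (prod_encode (x, acc)) = prod_encode (x, acc)" for N
    by (induction N) simp_all
  then show ?thesis
    unfolding path_header_def assms(2) by simp
qed

lemma header_nonroot:
  assumes "x \<in> {1..n}" "comp_root G r x \<noteq> x"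
  shows "header x acc = header (parent G r x) (prod_encode (down_port x, acc))"
  using climb_reaches_root[OF assms(1) depth_le, of acc] assms(2) comp_root_parent[OF assms(2)]
  unfolding path_header_def funpow_swap1 climb_step_table[OF assms(1) refl] by simp

lemma
  assumes "comp_root G r x \<noteq> x"
  shows relay_from_source: "R x (0, v) = (up_port x, prod_encode (0, v))"
    and relay_up: "p \<noteq> 0 \<Longrightarrow> R x (p, prod_encode (0, v)) = (up_port x, prod_encode (0, v))"
    and relay_down: "p \<noteq> 0 \<Longrightarrow> q \<noteq> 0 \<Longrightarrow> R x (p, prod_encode (q, h)) = (q, h)"
  using assms by (simp_all add: tree_routing_def relay_fun_def)

lemma
  assumes "comp_root G r x = x"
  shows root_from_source: "R x (0, v) = prod_decode (path_header (table x) (n * n) v 0)"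
    and root_from_below:
      "p \<noteq> 0 \<Longrightarrow> R x (p, prod_encode (0, v)) = prod_decode (path_header (table x) (n * n) v 0)"
  using assms by (simp_all add: tree_routing_def root_fun_def)

lemma hop_to_parent:
  assumes "comp_root G r x \<noteq> x" "R x (p, h) = (up_port x, h')"
  shows "route_run G pn R (x, p, h) 1 (parent G r x, up_port x, h')"
  using route_run_hop[where G = G and pn = pn and R = R, OF assms(2)] up_port[OF assms(1)] by simp

lemma hop_to_child:
  assumes "comp_root G r x \<noteq> x" "R (parent G r x) (p, h) = (down_port x, h')"
  shows "route_run G pn R (parent G r x, p, h) 1 (x, down_port x, h')"
  using route_run_hop[where G = G and pn = pn and R = R, OF assms(2)] down_port[OF assms(1)] by simp

lemma route_up:
  assumes "depth G r x = k" "p \<noteq> 0"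
  shows "\<exists>p'. p' \<noteq> 0 \<and>
           route_run G pn R (x, p, prod_encode (0, v)) k (comp_root G r x, p', prod_encode (0, v))"
  using assms
proof (induction k arbitrary: x p)
  case 0
  then have "comp_root G r x = x"
    using depth_eq_0_iff by simp
  with 0(2) show ?case
    using route_run_0 by metis
next
  case (Suc k)
  then have nonroot: "comp_root G r x \<noteq> x"
    using depth_eq_0_iff[of x] by simp
  have hop: "route_run G pn R (x, p, prod_encode (0, v)) 1 (parent G r x, up_port x, prod_encode (0, v))"
    using hop_to_parent[OF nonroot relay_up[OF nonroot Suc.prems(2)]] .
  have "depth G r (parent G r x) = k" "up_port x \<noteq> 0"
    using depth_parent[OF nonroot] Suc.prems(1) up_port(1)[OF nonroot] by simp_all
  from Suc.IH[OF this] obtain p' where "p' \<noteq> 0"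
    "route_run G pn R (parent G r x, up_port x, prod_encode (0, v)) k
       (comp_root G r x, p', prod_encode (0, v))"
    unfolding comp_root_parent[OF nonroot] by blast
  with route_run_add[OF hop] show ?case
    by auto
qed

lemma route_down:
  assumes "x \<in> {1..n}" "depth G r x = Suc k"
    and "R (comp_root G r x) (p0, h0) = prod_decode (header x acc)"
  shows "\<exists>p'. p' \<noteq> 0 \<and> route_run G pn R (comp_root G r x, p0, h0) (Suc k) (x, p', acc)"
  using assms
proof (induction k arbitrary: x acc)
  case 0
  then have nonroot: "comp_root G r x \<noteq> x"
    using depth_eq_0_iff[of x] by simp
  have "depth G r (parent G r x) = 0"
    using depth_parent[OF nonroot] 0(2) by simp
  then have root: "parent G r x = comp_root G r x"
    using depth_eq_0_iff comp_root_parent[OF nonroot] by metis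
  have "header x acc = prod_encode (down_port x, acc)"
    using header_nonroot[OF 0(1) nonroot] header_root[OF parent_in_nodes[OF nonroot]] root
      comp_root_idem
    by metis
  with 0(3) root have "route_run G pn R (comp_root G r x, p0, h0) 1 (x, down_port x, acc)"
    using hop_to_child[OF nonroot] by simp
  with down_port(1)[OF nonroot] show ?case
    by (intro exI[of _ "down_port x"]) auto
next
  case (Suc k)
  then have nonroot: "comp_root G r x \<noteq> x"
    using depth_eq_0_iff[of x] by simp
  let ?w = "parent G r x"
  have w: "depth G r ?w = Suc k" "comp_root G r ?w = comp_root G r x"
    using depth_parent[OF nonroot] Suc.prems(2) comp_root_parent[OF nonroot] by auto
  have "R (comp_root G r ?w) (p0, h0) = prod_decode (header ?w (prod_encode (down_port x, acc)))"
    using Suc.prems(3) header_nonroot[OF Suc.prems(1) nonroot] w(2) by simp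
  from Suc.IH[OF parent_in_nodes[OF nonroot] w(1) this] obtain p' where p': "p' \<noteq> 0"
    "route_run G pn R (comp_root G r x, p0, h0) (Suc k) (?w, p', prod_encode (down_port x, acc))"
    unfolding w(2) by blast
  have "comp_root G r ?w \<noteq> ?w" "down_port x \<noteq> 0"
    using w(1) depth_eq_0_iff[of ?w] down_port(1)[OF nonroot] by simp_all
  then have "route_run G pn R (?w, p', prod_encode (down_port x, acc)) 1 (x, down_port x, acc)"
    using hop_to_child[OF nonroot relay_down] p'(1) by blast
  from route_run_add[OF p'(2) this] \<open>down_port x \<noteq> 0\<close> show ?case
    by auto
qed

lemma route_to_root:
  "\<exists>p h. route_run G pn R (u, 0, v) (depth G r u) (comp_root G r u, p, h) \<and>
     R (comp_root G r u) (p, h) = prod_decode (path_header (table (comp_root G r u)) (n * n) v 0)"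
proof (cases "comp_root G r u = u")
  case True
  with root_from_source[OF True] show ?thesis
    using depth_eq_0_iff route_run_0 by metis
next
  case nonroot: False
  let ?\<rho> = "comp_root G r u"
  have hop: "route_run G pn R (u, 0, v) 1 (parent G r u, up_port u, prod_encode (0, v))"
    using hop_to_parent[OF nonroot relay_from_source[OF nonroot]] .
  have "up_port u \<noteq> 0"
    using up_port(1)[OF nonroot] by simp
  from route_up[where x = "parent G r u" and v = v, OF refl this] obtain p' where p': "p' \<noteq> 0"
    "route_run G pn R (parent G r u, up_port u, prod_encode (0, v))
       (depth G r (parent G r u)) (?\<rho>, p', prod_encode (0, v))"
    unfolding comp_root_parent[OF nonroot] by blast
  have "route_run G pn R (u, 0, v) (depth G r u) (?\<rho>, p', prod_encode (0, v))"
    using route_run_add[OF hop p'(2)] depth_parent[OF nonroot] by simp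
  with root_from_below[OF comp_root_idem p'(1)] show ?thesis
    by blast
qed

lemma route_exists:
  assumes "v \<in> {1..n}" "comp_root G r u = comp_root G r v"
  shows "\<exists>k \<le> depth G r u + depth G r v. route_arrives G pn R u v k"
proof -
  obtain p h where up: "route_run G pn R (u, 0, v) (depth G r u) (comp_root G r u, p, h)"
    and at_root: "R (comp_root G r v) (p, h) = prod_decode (header v 0)"
    using route_to_root assms(2) by metis
  show ?thesis
  proof (cases "depth G r v")
    case 0
    then have "comp_root G r u = v"
      using depth_eq_0_iff assms(2) by simp
    then have "route_arrives G pn R u v (depth G r u)"
      using up by (auto intro: route_arrives_if_run)
    then show ?thesis
      using le_add1 by blast
  next
    case (Suc k)
    from route_down[OF assms(1) Suc at_root] obtain p' where
      down: "route_run G pn R (comp_root G r v, p, h) (Suc k) (v, p', 0)"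
      by blast
    have "route_arrives G pn R u v (depth G r u + depth G r v)"
      using route_arrives_if_run[OF route_run_add[OF up[unfolded assms(2)] down]] Suc by simp
    then show ?thesis
      by blast
  qed
qed

end

section \<open>Programs for the routing functions and their size\<close>

definition relay_prog :: "nat \<Rightarrow> prog" where
  "relay_prog c = prog_if0 PFst (PPair (PConst c) (PPair PZero PSnd))
                    (prog_if0 (PComp PFst PSnd) (PPair (PConst c) PSnd) PSnd)"

lemma computes_relay_prog: "computes (relay_prog c) (relay_fun c)"
proof (rule computes_if_implements)
  show "implements (relay_prog c) (\<lambda>x. prod_encode (relay_fun c (prod_decode x)))"
    unfolding relay_prog_def
    by (rule implements_cong[OF implements_if0[OF implements_fst
          implements_pair[OF implements_const implements_pair[OF implements_zero implements_snd]]
          implements_if0[OF implements_comp[OF implements_fst implements_snd]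
            implements_pair[OF implements_const implements_snd] implements_snd]]])
       (simp add: relay_fun_def split_beta)
qed

definition climb_prog :: "(nat \<times> nat) list \<Rightarrow> prog" where
  "climb_prog es = prog_if0 (PComp (prog_table es) PFst) prog_id
     (PPair (PComp PFst (PComp (prog_table es) PFst))
            (PPair (PComp PSnd (PComp (prog_table es) PFst)) PSnd))"

lemma implements_climb_prog: "implements (climb_prog es) (climb_step (table_lookup es))"
proof -
  have lookup: "implements (PComp (prog_table es) PFst) (\<lambda>s. table_lookup es (fst (prod_decode s)))"
    using implements_comp[OF implements_table implements_fst] .
  show ?thesis
    unfolding climb_prog_def
    by (rule implements_cong[OF implements_if0[OF lookup implements_id
          implements_pair[OF implements_comp[OF implements_fst lookup]
            implements_pair[OF implements_comp[OF implements_snd lookup] implements_snd]]]])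
       (simp add: climb_step_def Let_def)
qed

definition path_header_prog :: "(nat \<times> nat) list \<Rightarrow> nat \<Rightarrow> prog" where
  "path_header_prog es N =
     PComp PSnd (PComp (prog_iterate (climb_prog es)) (PPair (PPair prog_id PZero) (PConst N)))"

lemma implements_path_header_prog:
  "implements (path_header_prog es N) (\<lambda>v. path_header (table_lookup es) N v 0)"
  using implements_comp[OF implements_snd implements_comp[OF
          implements_iterate[OF implements_climb_prog]
          implements_pair[OF implements_pair[OF implements_id implements_zero] implements_const]]]
  by (simp add: path_header_prog_def path_header_def)

definition root_prog :: "(nat \<times> nat) list \<Rightarrow> nat \<Rightarrow> prog" where
  "root_prog es N = prog_if0 PFst (PComp (path_header_prog es N) PSnd)
     (prog_if0 (PComp PFst PSnd) (PComp (path_header_prog es N) (PComp PSnd PSnd)) PSnd)"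

lemma computes_root_prog:
  "computes (root_prog es N) (root_fun (\<lambda>v. path_header (table_lookup es) N v 0))"
proof (rule computes_if_implements)
  note header = implements_path_header_prog[of es N]
  show "implements (root_prog es N)
          (\<lambda>x. prod_encode (root_fun (\<lambda>v. path_header (table_lookup es) N v 0) (prod_decode x)))"
    unfolding root_prog_def
    by (rule implements_cong[OF implements_if0[OF implements_fst
          implements_comp[OF header implements_snd]
          implements_if0[OF implements_comp[OF implements_fst implements_snd]
            implements_comp[OF header implements_comp[OF implements_snd implements_snd]]
            implements_snd]]])
       (simp add: root_fun_def split_beta)
qed

definition tree_routing_prog :: "nat \<Rightarrow> graph \<Rightarrow> nat \<Rightarrow> (nat \<Rightarrow> nat \<Rightarrow> nat) \<Rightarrow> nat \<Rightarrow> prog" where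
  "tree_routing_prog n G r pn x = (if comp_root G r x = x
     then root_prog (parent_table n G r pn x) (n * n)
     else relay_prog (port_to pn G x (parent G r x)))"

lemma computes_tree_routing_prog:
  "computes (tree_routing_prog n G r pn x) (tree_routing n G r pn x)"
  by (simp add: tree_routing_prog_def tree_routing_def computes_relay_prog computes_root_prog)

lemma length_selfdelim [simp]: "length (selfdelim xs) = 2 * length xs + 1"
  unfolding selfdelim_def by (induction xs) auto

declare bits.simps [simp del]

lemma bits_0 [simp]: "bits 0 = []"
  by (simp add: bits.simps)

lemma bits_nonzero: "x \<noteq> 0 \<Longrightarrow> bits x = odd x # bits (x div 2)"
  by (simp add: bits.simps)

lemma length_enc_relay_prog: "length (enc (relay_prog c)) = 118 + 4 * length (bits c)"
  by (simp add: relay_prog_def prog_if0_def prog_id_def)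

lemma length_enc_root_prog:
  "length (enc (root_prog es N)) = 446 + 6 * length (enc (prog_table es)) + 4 * length (bits N)"
  by (simp add: root_prog_def path_header_prog_def climb_prog_def prog_iterate_def
      prog_if0_def prog_id_def)

lemma length_enc_prog_table:
  "length (enc (prog_table es)) =
     4 + (\<Sum>(a, b)\<leftarrow>es. 283 + 4 * length (bits a) + 2 * length (bits b))"
  by (induction es rule: prog_table.induct)
     (simp_all add: prog_if_eq_def prog_absdiff_def prog_add_def prog_sub_def prog_pred_def
       prog_iterate_def prog_if0_def prog_id_def)

lemma length_bits_le: "x < 2 ^ k \<Longrightarrow> length (bits x) \<le> k"
proof (induction k arbitrary: x)
  case (Suc k)
  then show ?case
    by (cases "x = 0") (simp_all add: bits_nonzero)
qed simp

lemma less_power_length_bits: "x < 2 ^ length (bits x)"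
proof (induction x rule: bits.induct)
  case (1 x)
  then show ?case
    by (cases "x = 0") (simp_all add: bits_nonzero)
qed

lemma power_length_bits_le: "1 \<le> x \<Longrightarrow> 2 ^ length (bits x) \<le> 2 * x"
proof (induction x rule: bits.induct)
  case (1 x)
  then show ?case
    by (cases "x div 2 = 0") (simp_all add: bits_nonzero)
qed

lemma length_bits_mono: "x \<le> y \<Longrightarrow> length (bits x) \<le> length (bits y)"
  using less_power_length_bits[of y] by (intro length_bits_le) simp

lemma length_bits_mult: "length (bits (x * y)) \<le> length (bits x) + length (bits y)"
  using mult_strict_mono[OF less_power_length_bits[of x] less_power_length_bits[of y]]
  by (intro length_bits_le) (simp add: power_add)

lemma length_bits_prod_encode:
  assumes "a < 2 ^ k" "b < 2 ^ k"
  shows "length (bits (prod_encode (a, b))) \<le> 2 * k + 2"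
proof (rule length_bits_le)
  have "prod_encode (a, b) \<le> (a + b) * (a + b + 1) div 2 + (a + b + 1)"
    by (simp add: prod_encode_def triangle_def)
  also have "\<dots> \<le> (a + b + 1) * (a + b + 1)"
    by (simp add: algebra_simps div_le_dividend)
  also have "\<dots> < 2 ^ (k + 1) * 2 ^ (k + 1)"
    using assms by (intro mult_strict_mono) simp_all
  also have "(2::nat) ^ (k + 1) * 2 ^ (k + 1) = 2 ^ (2 * k + 2)"
    by (simp only: power_add[symmetric]) (simp add: mult_2)
  finally show "prod_encode (a, b) < 2 ^ (2 * k + 2)" .
qed

lemma length_bits_le_ln:
  assumes "1 \<le> n"
  shows "real (length (bits n)) \<le> 1 + 2 * ln (real n)"
proof -
  let ?B = "real (length (bits n))"
  have "real (2 ^ length (bits n)) \<le> real (2 * n)"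
    using power_length_bits_le[OF assms] by (simp only: of_nat_le_iff)
  then have "ln ((2::real) ^ length (bits n)) \<le> ln (2 * real n)"
    using assms by (intro ln_mono) simp_all
  then have "(?B - 1) * ln 2 \<le> ln (real n)"
    using assms by (simp add: ln_realpow ln_mult algebra_simps)
  moreover have "(?B - 1) * (1 / 2) \<le> (?B - 1) * ln 2"
  proof (rule mult_left_mono)
    show "1 / 2 \<le> ln (2::real)"
      using ln_ge_iff[of 2 "1/2"] exp_half_le2 by simp
    show "0 \<le> ?B - 1"
      using assms by (simp add: bits_nonzero)
  qed
  ultimately have "(?B - 1) * (1 / 2) \<le> ln (real n)"
    by (rule order_trans[rotated])
  then show ?thesis
    by (simp add: field_simps)
qed

lemma local_memory_le: "computes q Ru \<Longrightarrow> local_memory Ru \<le> enat (length (enc q))"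
  unfolding local_memory_def by (rule INF_lower) simp

lemma total_memory_le_sum:
  assumes "\<And>x. x \<in> {1..n} \<Longrightarrow> computes (P x) (R x)"
  shows "\<exists>m. total_memory n R = enat m \<and> m \<le> (\<Sum>x\<in>{1..n}. length (enc (P x)))"
proof -
  have "total_memory n R \<le> (\<Sum>x\<in>{1..n}. enat (length (enc (P x))))"
    unfolding total_memory_def using assms local_memory_le by (intro sum_mono) blast
  also have "\<dots> = enat (\<Sum>x\<in>{1..n}. length (enc (P x)))"
    unfolding of_nat_eq_enat[symmetric] by (rule of_nat_sum[symmetric])
  finally show ?thesis
    by (metis enat_ile enat_ord_simps(1))
qed

context tree_routing_scheme
begin

lemma sum_card_component: "(\<Sum>x\<in>{1..n}. card (component n G r x)) = n"
proof -
  have "(\<Sum>x\<in>{1..n}. card (component n G r x)) = (\<Sum>x\<in>{1..n}. \<Sum>y\<in>component n G r x. 1)"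
    by simp
  also have "\<dots> = (\<Sum>y\<in>{1..n}. \<Sum>x\<in>{x \<in> {1..n}. comp_root G r y = x}. 1)"
    unfolding component_def by (rule sum.swap_restrict) auto
  also have "\<dots> = (\<Sum>y\<in>{1..n}. 1)"
  proof (rule sum.cong)
    fix y assume "y \<in> {1..n}"
    then have "{x \<in> {1..n}. comp_root G r y = x} = {comp_root G r y}"
      using comp_root_in_nodes by auto
    then show "(\<Sum>x\<in>{x \<in> {1..n}. comp_root G r y = x}. 1) = (1::nat)"
      by simp
  qed simp
  finally show ?thesis
    by simp
qed

abbreviation "B \<equiv> length (bits n)"

lemma length_bits_parent_entry:
  assumes "y \<in> {1..n}"
  shows "length (bits (parent_entry pn G r y)) \<le> 2 * B + 2"
proof (cases "comp_root G r y = y")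
  case nonroot: False
  have "parent G r y < 2 ^ B" "down_port y < 2 ^ B"
    using parent_in_nodes[OF nonroot] down_port(1)[OF nonroot] deg_le[of "parent G r y"]
      less_power_length_bits[of n] by fastforce+
  then show ?thesis
    using nonroot length_bits_prod_encode by (simp add: parent_entry_def)
qed (simp add: parent_entry_def)

lemma length_enc_tree_routing_prog:
  assumes "x \<in> {1..n}"
  shows "length (enc (tree_routing_prog n G r pn x))
           \<le> 470 + 8 * B + 6 * card (component n G r x) * (287 + 8 * B)"
proof (cases "comp_root G r x = x")
  case True
  have entry: "283 + 4 * length (bits y) + 2 * length (bits (parent_entry pn G r y)) \<le> 287 + 8 * B"
    if "y \<in> component n G r x" for y
    using that length_bits_mono[of y n] length_bits_parent_entry[of y]
    by (simp add: component_def)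
  have "length (enc (prog_table (parent_table n G r pn x)))
          = 4 + (\<Sum>y\<in>component n G r x. 283 + 4 * length (bits y)
                                             + 2 * length (bits (parent_entry pn G r y)))"
    by (simp add: length_enc_prog_table parent_table_def sum_list_distinct_conv_sum_set
        component_def o_def)
  also have "\<dots> \<le> 4 + card (component n G r x) * (287 + 8 * B)"
    using sum_mono[OF entry] by simp
  finally show ?thesis
    using True length_bits_mult[of n n]
    by (simp add: tree_routing_prog_def length_enc_root_prog)
next
  case False
  have "up_port x \<le> n"
    using up_port(1)[OF False] deg_le[of x] by simp
  then have "length (bits (up_port x)) \<le> B"
    by (rule length_bits_mono)
  then show ?thesis
    using False by (simp add: tree_routing_prog_def length_enc_relay_prog)
qed

lemma total_memory_tree_routing:
  assumes "3 \<le> n"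
  shows "\<exists>m. total_memory n R = enat m \<and> real m \<le> 2360 * real n * ln (real n)"
proof -
  define K where "K = 287 + 8 * B"
  obtain m where m: "total_memory n R = enat m"
    and m_le: "m \<le> (\<Sum>x\<in>{1..n}. length (enc (tree_routing_prog n G r pn x)))"
    using total_memory_le_sum computes_tree_routing_prog by blast
  note m_le
  also have "(\<Sum>x\<in>{1..n}. length (enc (tree_routing_prog n G r pn x)))
               \<le> (\<Sum>x\<in>{1..n}. 470 + 8 * B + 6 * card (component n G r x) * K)"
    unfolding K_def by (intro sum_mono length_enc_tree_routing_prog)
  also have "\<dots> = n * (470 + 8 * B) + 6 * K * (\<Sum>x\<in>{1..n}. card (component n G r x))"
    by (simp add: sum.distrib sum_distrib_left mult_ac)
  also have "\<dots> = n * (2192 + 56 * B)"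
    unfolding sum_card_component K_def by (simp add: algebra_simps)
  finally have "real m \<le> real (n * (2192 + 56 * B))"
    by (simp only: of_nat_le_iff)
  also have "\<dots> = real n * (2192 + 56 * real B)"
    by simp
  also have "\<dots> \<le> real n * (2360 * ln (real n))"
  proof (intro mult_left_mono)
    have "1 \<le> ln (real n)"
      using exp_le assms by (subst ln_ge_iff) simp_all
    then show "2192 + 56 * real B \<le> 2360 * ln (real n)"
      using length_bits_le_ln[of n] assms by simp
  qed simp
  finally show ?thesis
    using m by (auto simp: mult.assoc)
qed

end

section \<open>Stretch\<close>

lemma prob_Int3_ge:
  fixes p :: "'a pmf"
  shows "measure_pmf.prob p A + measure_pmf.prob p B + measure_pmf.prob p C - 2
           \<le> measure_pmf.prob p (A \<inter> B \<inter> C)"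
proof -
  have compl: "measure_pmf.prob p (- X) = 1 - measure_pmf.prob p X" for X
    using measure_pmf.prob_compl[of X p] by (simp add: Compl_eq_Diff_UNIV)
  have "measure_pmf.prob p (- A \<union> - B \<union> - C)
          \<le> measure_pmf.prob p (- A \<union> - B) + measure_pmf.prob p (- C)"
    by (rule measure_Un_le) auto
  also have "measure_pmf.prob p (- A \<union> - B) \<le> measure_pmf.prob p (- A) + measure_pmf.prob p (- B)"
    by (rule measure_Un_le) auto
  finally have "measure_pmf.prob p (- (A \<inter> B \<inter> C))
                  \<le> measure_pmf.prob p (- A) + measure_pmf.prob p (- B) + measure_pmf.prob p (- C)"
    by (simp add: Un_ac)
  then show ?thesis
    unfolding compl by simp
qed

lemma root_pair_sample_marginals:
  "map_pmf (\<lambda>(G, r, u, v). (G, r, u)) (root_pair_sample M n) = pair_sample M n"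
  "map_pmf (\<lambda>(G, r, u, v). (G, r, v)) (root_pair_sample M n) = pair_sample M n"
  "map_pmf (\<lambda>(G, r, u, v). (G, u, v)) (root_pair_sample M n) = pair_sample M n"
  unfolding root_pair_sample_def pair_sample_def by (simp_all add: map_bind_pmf)

lemma set_root_pair_sample:
  assumes "1 \<le> n" "(G, r, u, v) \<in> set_pmf (root_pair_sample M n)"
  shows "G \<in> set_pmf (M n)" "r \<in> {1..n}" "u \<in> {1..n}" "v \<in> {1..n}"
  using assms by (auto simp: root_pair_sample_def)

lemma root_pair_sample_three_pairs:
  assumes "(\<lambda>n. measure_pmf.prob (pair_sample M n) (E n)) \<longlonglongrightarrow> 1"
  shows "(\<lambda>n. measure_pmf.prob (root_pair_sample M n)
            {(G, r, u, v). (G, r, u) \<in> E n \<and> (G, r, v) \<in> E n \<and> (G, u, v) \<in> E n}) \<longlonglongrightarrow> 1"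
proof (rule tendsto_sandwich[OF _ _ _ tendsto_const])
  let ?P = "\<lambda>n. measure_pmf.prob (pair_sample M n) (E n)"
  let ?T = "\<lambda>n. {(G, r, u, v). (G, r, u) \<in> E n \<and> (G, r, v) \<in> E n \<and> (G, u, v) \<in> E n}"
  have "3 * ?P n - 2 \<le> measure_pmf.prob (root_pair_sample M n) (?T n)" for n
  proof -
    let ?pr = "measure_pmf.prob (root_pair_sample M n)"
    let ?A = "(\<lambda>(G, r, u, v). (G, r, u)) -` E n"
    let ?B = "(\<lambda>(G, r, u, v). (G, r, v)) -` E n"
    let ?C = "(\<lambda>(G, r, u, v). (G, u, v)) -` E n"
    have marginals: "?pr ?A = ?P n" "?pr ?B = ?P n" "?pr ?C = ?P n"
      by (metis measure_map_pmf root_pair_sample_marginals)+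
    have "?T n = ?A \<inter> ?B \<inter> ?C"
      by auto
    then have "?P n + ?P n + ?P n - 2 \<le> ?pr (?T n)"
      using prob_Int3_ge[of "root_pair_sample M n" ?A ?B ?C] unfolding marginals by simp
    then show ?thesis
      by linarith
  qed
  then show "\<forall>\<^sub>F n in sequentially. 3 * ?P n - 2 \<le> measure_pmf.prob (root_pair_sample M n) (?T n)"
    by simp
  show "\<forall>\<^sub>F n in sequentially. measure_pmf.prob (root_pair_sample M n) (?T n) \<le> 1"
    by (simp add: measure_pmf.prob_le_1)
  show "(\<lambda>n. 3 * ?P n - 2) \<longlonglongrightarrow> 1"
    using tendsto_diff[OF tendsto_mult[OF tendsto_const assms] tendsto_const, of 3 2] by simp
qed

definition dist_near :: "graph \<Rightarrow> real \<Rightarrow> real \<Rightarrow> nat \<Rightarrow> nat \<Rightarrow> bool" where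
  "dist_near G f \<delta> a b \<longleftrightarrow>
     gdist G a b \<noteq> \<infinity> \<and> \<bar>real (the_enat (gdist G a b)) / f - 1\<bar> \<le> \<delta>"

lemma stretch_from_concentration:
  fixes \<epsilon> a b c k f :: real
  assumes "\<epsilon> > 0" "0 \<le> c"
    and a: "\<bar>a / f - 1\<bar> \<le> \<epsilon> / (4 + \<epsilon>)" and b: "\<bar>b / f - 1\<bar> \<le> \<epsilon> / (4 + \<epsilon>)"
    and c: "\<bar>c / f - 1\<bar> \<le> \<epsilon> / (4 + \<epsilon>)" and k: "k \<le> a + b"
  shows "k \<le> (2 + \<epsilon>) * c"
proof -
  define \<delta> where "\<delta> = \<epsilon> / (4 + \<epsilon>)"
  \<comment> \<open>chosen so that 2 (1 + \<delta>) = (2 + \<epsilon>) (1 - \<delta>)\<close>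
  have "\<delta> < 1"
    using assms(1) by (simp add: \<delta>_def)
  have "f > 0"
  proof (rule ccontr)
    assume "\<not> f > 0"
    then have "c / f \<le> 0"
      using assms(2) by (simp add: divide_nonneg_nonpos)
    with c \<open>\<delta> < 1\<close> show False
      unfolding \<delta>_def[symmetric] by linarith
  qed
  then have "a \<le> (1 + \<delta>) * f" "b \<le> (1 + \<delta>) * f" and c': "(1 - \<delta>) * f \<le> c"
    using a b c unfolding \<delta>_def[symmetric] by (auto simp: abs_le_iff field_simps)
  with k have "k \<le> 2 * (1 + \<delta>) * f"
    by linarith
  also have "2 * (1 + \<delta>) = (2 + \<epsilon>) * (1 - \<delta>)"
    using assms(1) by (simp add: \<delta>_def field_simps)
  also have "(2 + \<epsilon>) * (1 - \<delta>) * f \<le> (2 + \<epsilon>) * c"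
    using c' assms(1) unfolding mult.assoc by (intro mult_left_mono) auto
  finally show ?thesis .
qed

context tree_routing_scheme
begin

lemma routing_function_tree_routing: "routing_function n G pn R"
  unfolding routing_function_def
proof (intro ballI impI)
  fix u v assume "v \<in> {1..n}" and "u \<noteq> v \<and> gdist G u v \<noteq> \<infinity>"
  then have "comp_root G r u = comp_root G r v"
    using comp_root_eq gdist_finite_iff by blast
  with route_exists[OF \<open>v \<in> {1..n}\<close>] show "\<exists>k. route_arrives G pn R u v k"
    by blast
qed

lemma depth_eq_gdist:
  assumes "(r, x) \<in> G\<^sup>*"
  shows "depth G r x = the_enat (gdist G r x)"
proof -
  have "comp_root G r x = r"
    using assms by (simp add: comp_root_def)
  then show ?thesis
    unfolding depth_def gdist_eq if_P[OF assms] by simp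
qed

lemma route_stretch:
  fixes \<epsilon> f :: real
  defines "\<delta> \<equiv> \<epsilon> / (4 + \<epsilon>)"
  assumes "\<epsilon> > 0" "v \<in> {1..n}"
    and ru: "dist_near G f \<delta> r u" and rv: "dist_near G f \<delta> r v" and uv: "dist_near G f \<delta> u v"
  shows "route_length_le G pn R u v ((2 + \<epsilon>) * real (the_enat (gdist G u v)))"
proof -
  have reach_u: "(r, u) \<in> G\<^sup>*" and reach_v: "(r, v) \<in> G\<^sup>*"
    using ru rv gdist_finite_iff unfolding dist_near_def by blast+
  then have "comp_root G r u = comp_root G r v"
    by (simp add: comp_root_def)
  with route_exists[OF assms(3)] obtain k where
    k: "k \<le> depth G r u + depth G r v" and arrives: "route_arrives G pn R u v k"
    by blast
  have "real k \<le> real (the_enat (gdist G r u)) + real (the_enat (gdist G r v))"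
    using k unfolding depth_eq_gdist[OF reach_u] depth_eq_gdist[OF reach_v] by linarith
  with ru rv uv have "real k \<le> (2 + \<epsilon>) * real (the_enat (gdist G u v))"
    unfolding dist_near_def \<delta>_def
    by (intro stretch_from_concentration[OF \<open>\<epsilon> > 0\<close> of_nat_0_le_iff]) auto
  with arrives show ?thesis
    unfolding route_length_le_def by blast
qed

end

lemma root_pair_sample_route_stretch:
  assumes scheme: "\<And>n G. G \<in> set_pmf (M n) \<Longrightarrow> tree_routing_scheme n G (PN G)"
    and "\<epsilon> > 0" "1 \<le> n" "s \<in> set_pmf (root_pair_sample M n)"
    and "s \<in> {(G, r, u, v). dist_near G f (\<epsilon> / (4 + \<epsilon>)) r u \<and>
                 dist_near G f (\<epsilon> / (4 + \<epsilon>)) r v \<and> dist_near G f (\<epsilon> / (4 + \<epsilon>)) u v}"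
  shows "s \<in> {(G, r, u, v). gdist G u v \<noteq> \<infinity> \<and>
                route_length_le G (PN G) (tree_routing n G r (PN G)) u v
                  ((2 + \<epsilon>) * real (the_enat (gdist G u v)))}"
proof -
  obtain G r u v where s: "s = (G, r, u, v)"
    by (metis prod_cases4)
  then have "G \<in> set_pmf (M n)" "v \<in> {1..n}"
    using set_root_pair_sample[OF assms(3)] assms(4) by simp_all
  then interpret tree_routing_scheme n G r "PN G"
    using scheme by blast
  have near: "dist_near G f (\<epsilon> / (4 + \<epsilon>)) r u" "dist_near G f (\<epsilon> / (4 + \<epsilon>)) r v"
    "dist_near G f (\<epsilon> / (4 + \<epsilon>)) u v"
    using assms(5) unfolding s by simp_all
  with route_stretch[OF \<open>\<epsilon> > 0\<close> \<open>v \<in> {1..n}\<close> near] show ?thesis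
    unfolding s dist_near_def by simp
qed

lemma tree_routing_stretch:
  assumes scheme: "\<And>n G. G \<in> set_pmf (M n) \<Longrightarrow> tree_routing_scheme n G (PN G)"
    and "idemetric M" and "\<epsilon> > 0"
  shows "(\<lambda>n. measure_pmf.prob (root_pair_sample M n)
           {(G, r, u, v). gdist G u v \<noteq> \<infinity> \<and>
              route_length_le G (PN G) (tree_routing n G r (PN G)) u v
                ((2 + \<epsilon>) * real (the_enat (gdist G u v)))}) \<longlonglongrightarrow> 1"
    (is "(\<lambda>n. measure_pmf.prob _ (?S n)) \<longlonglongrightarrow> 1")
proof -
  obtain f :: "nat \<Rightarrow> real" where concentration: "\<forall>\<delta>>0. (\<lambda>n. measure_pmf.prob (pair_sample M n)
      {(G, u, v). gdist G u v \<noteq> \<infinity> \<and> \<bar>real (the_enat (gdist G u v)) / f n - 1\<bar> \<le> \<delta>}) \<longlonglongrightarrow> 1"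
    using \<open>idemetric M\<close> unfolding idemetric_def by blast
  define E where "E n = {(G, u, v). dist_near G (f n) (\<epsilon> / (4 + \<epsilon>)) u v}" for n
  let ?T = "\<lambda>n. {(G, r, u, v). (G, r, u) \<in> E n \<and> (G, r, v) \<in> E n \<and> (G, u, v) \<in> E n}"
  have "\<epsilon> / (4 + \<epsilon>) > 0"
    using \<open>\<epsilon> > 0\<close> by simp
  with concentration have "(\<lambda>n. measure_pmf.prob (pair_sample M n) (E n)) \<longlonglongrightarrow> 1"
    unfolding E_def dist_near_def by blast
  then have triples: "(\<lambda>n. measure_pmf.prob (root_pair_sample M n) (?T n)) \<longlonglongrightarrow> 1"
    by (rule root_pair_sample_three_pairs)
  have "measure_pmf.prob (root_pair_sample M n) (?T n) \<le> measure_pmf.prob (root_pair_sample M n) (?S n)"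
    if "1 \<le> n" for n
    using root_pair_sample_route_stretch[OF scheme \<open>\<epsilon> > 0\<close> that]
    by (intro measure_pmf.finite_measure_mono_AE AE_pmfI) (simp_all add: E_def)
  then have "\<forall>\<^sub>F n in sequentially. measure_pmf.prob (root_pair_sample M n) (?T n)
                                     \<le> measure_pmf.prob (root_pair_sample M n) (?S n)"
    by (rule eventually_sequentiallyI)
  then show ?thesis
    by (rule tendsto_sandwich[OF _ _ triples tendsto_const]) (simp add: measure_pmf.prob_le_1)
qed

theorem theorem4:
  fixes M :: "nat \<Rightarrow> graph pmf"
    and PN :: "graph \<Rightarrow> nat \<Rightarrow> nat \<Rightarrow> nat"
  assumes "random_network_model M"
    and "idemetric M"
    and "\<forall>n. \<forall>G\<in>set_pmf (M n). port_numbering n G (PN G)"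
  shows "\<exists>Rt :: nat \<Rightarrow> graph \<Rightarrow> nat \<Rightarrow> routing.
     (\<forall>n. \<forall>G\<in>set_pmf (M n). \<forall>r\<in>{1..n}. routing_function n G (PN G) (Rt n G r))
   \<and> (\<exists>C N. \<forall>n\<ge>N. \<forall>G\<in>set_pmf (M n). \<forall>r\<in>{1..n}.
        \<exists>m. total_memory n (Rt n G r) = enat m \<and> real m \<le> C * real n * ln (real n))
   \<and> (\<forall>\<epsilon>>0. (\<lambda>n. measure_pmf.prob (root_pair_sample M n)
        {(G, r, u, v). gdist G u v \<noteq> \<infinity> \<and>
           route_length_le G (PN G) (Rt n G r) u v ((2 + \<epsilon>) * real (the_enat (gdist G u v)))})
      \<longlonglongrightarrow> 1)"
proof -
  have scheme: "tree_routing_scheme n G (PN G)" if "G \<in> set_pmf (M n)" for n G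
    using assms(1,3) that unfolding random_network_model_def
    by unfold_locales blast+
  show ?thesis
    using tree_routing_scheme.routing_function_tree_routing[OF scheme]
      tree_routing_scheme.total_memory_tree_routing[OF scheme]
      tree_routing_stretch[OF scheme assms(2)]
    by (intro exI[of _ "\<lambda>n G r. tree_routing n G r (PN G)"] conjI) blast+
qed

end
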